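(* Let $G$ be a finite group with $|G|\equiv 3 \pmod 6$, $G'\cong C_5\times C_5$ and $G'\cap Z(G)=\{1\}$. Then (1) $|\mathrm{Cl}_G(x)|=3$ for all $x\in G'\setminus Z(G)$, and (2) $|G/C_G(G')|=3$.
   Context: $G'$ is the commutator subgroup, $Z(G)$ the center, $C_G(G')$ the centralizer of $G'$ in $G$, $\mathrm{Cl}_G(x)$ the conjugacy class of $x$, $C_5$ the cyclic group of order $5$. *)

theory Defs
  imports "HOL-Algebra.Algebra"
begin

definition center :: "('a, 'b) monoid_scheme \<Rightarrow> 'a set" where
  "center G = {z \<in> carrier G. \<forall>g \<in> carrier G. z \<otimes>\<^bsub>G\<^esub> g = g \<otimes>\<^bsub>G\<^esub> z}"

definition centralizer :: "('a, 'b) monoid_scheme \<Rightarrow> 'a set \<Rightarrow> 'a set" where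
  "centralizer G H = {g \<in> carrier G. \<forall>h \<in> H. g \<otimes>\<^bsub>G\<^esub> h = h \<otimes>\<^bsub>G\<^esub> g}"

definition conj_class :: "('a, 'b) monoid_scheme \<Rightarrow> 'a \<Rightarrow> 'a set" where
  "conj_class G x = {g \<otimes>\<^bsub>G\<^esub> x \<otimes>\<^bsub>G\<^esub> inv\<^bsub>G\<^esub> g | g. g \<in> carrier G}"

end

theory Submission
  imports Defs "HOL-Computational_Algebra.Primes"
begin

text \<open>Write \<open>V = G'\<close> and \<open>C = C_G(V)\<close>. As \<open>|G|\<close> is odd, class sizes are odd, so every
element of \<open>V\<close> outside \<open>Z(G)\<close> has a class of size at least 3. For \<open>g \<notin> C\<close> the subgroup
\<open>V \<inter> C_G(g)\<close> is normal in \<open>G\<close>, because conjugates of \<open>g\<close> differ from \<open>g\<close> by elements of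
the abelian group \<open>V\<close>. It is not \<open>V\<close>, and it cannot have order 5, so it is trivial. Hence
\<open>C_G(x) = C\<close> for every \<open>1 \<noteq> x \<in> V\<close>, the 24 non-trivial elements of \<open>V\<close> fall into classes of
the common size \<open>|G : C|\<close>, and 3 is the only odd divisor of 24 that is at least 3.\<close>

lemma dvd_prime_square_cases:
  assumes "Factorial_Ring.prime (p::nat)" "d dvd p\<^sup>2"
  shows "d = 1 \<or> d = p \<or> d = p\<^sup>2"
proof -
  obtain i where "i \<le> 2" "d = p ^ i"
    using divides_primepow_nat[OF assms(1)] assms(2) by blast
  then show ?thesis by (auto simp: le_Suc_eq numeral_2_eq_2)
qed

lemma odd_divisor_of_24:
  assumes "(k::nat) dvd 24" "odd k" "k \<ge> 2"
  shows "k = 3"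
proof -
  have "coprime k 8"
    using \<open>odd k\<close> coprime_power_right_iff[of k 2 3] by simp
  then have "k dvd 3"
    using \<open>k dvd 24\<close> coprime_dvd_mult_right_iff[of k 8 3] by simp
  then show ?thesis
    using \<open>k \<ge> 2\<close> dvd_imp_le[of k 3] by (cases "k = 2") auto
qed

lemma comm_group_DirProd:
  assumes "comm_group G" "comm_group H"
  shows "comm_group (G \<times>\<times> H)"
proof (rule group.group_comm_groupI)
  show "group (G \<times>\<times> H)"
    using assms by (simp add: DirProd_group comm_group.axioms(2))
next
  fix x y assume "x \<in> carrier (G \<times>\<times> H)" "y \<in> carrier (G \<times>\<times> H)"
  then show "x \<otimes>\<^bsub>G \<times>\<times> H\<^esub> y = y \<otimes>\<^bsub>G \<times>\<times> H\<^esub> x"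
    using comm_monoid.m_comm[OF comm_group.axioms(1)[OF assms(1)]]
      comm_monoid.m_comm[OF comm_group.axioms(1)[OF assms(2)]] by (auto simp: DirProd_def)
qed

context group
begin

lemma subgroup_commutes_if_iso_comm_group:
  assumes "subgroup H G" "subgroup_generated G H \<cong> K" "comm_group K"
    and "x \<in> H" "y \<in> H"
  shows "x \<otimes> y = y \<otimes> x"
proof -
  have "comm_group (subgroup_generated G H)"
    using comm_group.iso_imp_comm_group[OF assms(3) group.iso_sym[OF _ assms(2)]]
    by (simp add: group.is_monoid)
  then show ?thesis
    using comm_monoid.m_comm[OF comm_group.axioms(1), of "subgroup_generated G H" x y] assms(1,4,5)
    by (simp add: subgroup.carrier_subgroup_generated_subgroup)
qed

lemma card_subgroup_dvd_card:
  assumes "subgroup H G" "subgroup K G" "H \<subseteq> K"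
  shows "card H dvd card K"
proof -
  interpret K: group "G\<lparr>carrier := K\<rparr>"
    using subgroup.subgroup_is_group[OF assms(2) is_group] .
  have "card (rcosets\<^bsub>G\<lparr>carrier := K\<rparr>\<^esub> H) * card H = card K"
    using K.lagrange[OF subgroup_incl[OF assms]] by (simp add: order_def)
  then show ?thesis by (metis dvd_triv_right)
qed

lemma commute_inv:
  assumes "g \<in> carrier G" "h \<in> carrier G" "g \<otimes> h = h \<otimes> g"
  shows "inv g \<otimes> h = h \<otimes> inv g"
proof -
  have "inv g \<otimes> h = inv g \<otimes> (h \<otimes> g) \<otimes> inv g"
    using assms(1,2) by (simp add: m_assoc)
  also have "\<dots> = inv g \<otimes> (g \<otimes> h) \<otimes> inv g"
    using assms(3) by simp
  also have "\<dots> = h \<otimes> inv g"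
    using assms(1,2) by (simp add: m_assoc[symmetric])
  finally show ?thesis .
qed

lemma subgroup_centralizer:
  assumes "H \<subseteq> carrier G"
  shows "subgroup (centralizer G H) G"
proof (rule subgroupI)
  show "centralizer G H \<subseteq> carrier G" by (auto simp: centralizer_def)
  have "\<one> \<in> centralizer G H"
    using assms by (auto simp: centralizer_def)
  then show "centralizer G H \<noteq> {}" by blast
next
  fix g assume "g \<in> centralizer G H"
  then show "inv g \<in> centralizer G H"
    using assms commute_inv by (auto simp: centralizer_def)
next
  fix g k assume g: "g \<in> centralizer G H" and k: "k \<in> centralizer G H"
  show "g \<otimes> k \<in> centralizer G H"
    unfolding centralizer_def
  proof (intro CollectI conjI ballI)
    show "g \<otimes> k \<in> carrier G" using g k by (auto simp: centralizer_def)
  next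
    fix h assume "h \<in> H"
    then have carr: "g \<in> carrier G" "k \<in> carrier G" "h \<in> carrier G"
      and gh: "g \<otimes> h = h \<otimes> g" and kh: "k \<otimes> h = h \<otimes> k"
      using g k assms by (auto simp: centralizer_def)
    have "g \<otimes> k \<otimes> h = g \<otimes> h \<otimes> k" using kh carr by (simp add: m_assoc)
    also have "\<dots> = h \<otimes> (g \<otimes> k)" using gh carr by (simp add: m_assoc[symmetric])
    finally show "g \<otimes> k \<otimes> h = h \<otimes> (g \<otimes> k)" .
  qed
qed

lemma conj_class_eq_orbit:
  "conj_class G x = orbit G (\<lambda>g. \<lambda>h \<in> carrier G. g \<otimes> h \<otimes> inv g) x" if "x \<in> carrier G"
  using that unfolding conj_class_def orbit_def by auto

lemma conj_eq_self_iff_commute: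
  assumes "g \<in> carrier G" "x \<in> carrier G"
  shows "g \<otimes> x \<otimes> inv g = x \<longleftrightarrow> g \<otimes> x = x \<otimes> g"
  using inv_solve_right'[of x "g \<otimes> x" g] assms by simp

lemma centralizer_singleton_eq_stabilizer:
  "centralizer G {x} = stabilizer G (\<lambda>g. \<lambda>h \<in> carrier G. g \<otimes> h \<otimes> inv g) x" if "x \<in> carrier G"
  using that conj_eq_self_iff_commute unfolding centralizer_def stabilizer_def by auto

lemma card_conj_class_mult_card_centralizer:
  assumes "x \<in> carrier G"
  shows "card (conj_class G x) * card (centralizer G {x}) = order G"
  using group_action.orbit_stabilizer_theorem[OF action_by_conjugation assms]
  by (simp add: conj_class_eq_orbit centralizer_singleton_eq_stabilizer assms)

lemma conj_class_eq_or_disjoint: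
  assumes "x \<in> carrier G" "y \<in> carrier G"
  shows "conj_class G x = conj_class G y \<or> conj_class G x \<inter> conj_class G y = {}"
  using group_action.disjoint_union[OF action_by_conjugation, of "conj_class G x" "conj_class G y"]
    assms by (auto simp: conj_class_eq_orbit orbits_def)

lemma self_in_conj_class: "x \<in> carrier G \<Longrightarrow> x \<in> conj_class G x"
  unfolding conj_class_def by (rule CollectI, rule exI[of _ \<one>]) simp

lemma conj_class_subset_normal:
  assumes "N \<lhd> G" "x \<in> N"
  shows "conj_class G x \<subseteq> N"
  using normal.inv_op_closed2[OF assms(1) _ assms(2)] unfolding conj_class_def by auto

lemma one_notin_conj_class:
  assumes "x \<in> carrier G" "x \<noteq> \<one>"
  shows "\<one> \<notin> conj_class G x"
proof
  assume "\<one> \<in> conj_class G x"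
  then obtain g where g: "g \<in> carrier G" "g \<otimes> x \<otimes> inv g = \<one>"
    unfolding conj_class_def by auto
  then have "g \<otimes> x = g \<otimes> \<one>"
    using assms(1) inv_solve_right'[of \<one> "g \<otimes> x" g] by simp
  then show False
    using g(1) assms l_cancel by blast
qed

lemma finite_carrier_if_odd_order: "odd (order G) \<Longrightarrow> finite (carrier G)"
  by (simp add: odd_pos flip: order_gt_0_iff_finite)

lemma odd_card_conj_class:
  assumes "odd (order G)" "x \<in> carrier G"
  shows "odd (card (conj_class G x))"
  using card_conj_class_mult_card_centralizer[OF assms(2)] assms(1) by (metis even_mult_iff)

lemma card_conj_class_ge_3:
  assumes "odd (order G)" "x \<in> carrier G" "x \<notin> center G"
  shows "card (conj_class G x) \<ge> 3"
proof -
  have "conj_class G x \<subseteq> carrier G"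
    using assms(2) by (auto simp: conj_class_def)
  then have "finite (conj_class G x)"
    using finite_carrier_if_odd_order[OF assms(1)] finite_subset by blast
  moreover obtain g where g: "g \<in> carrier G" "x \<otimes> g \<noteq> g \<otimes> x"
    using assms(2,3) unfolding center_def by auto
  then have "g \<otimes> x \<otimes> inv g \<noteq> x"
    using assms(2) conj_eq_self_iff_commute by auto
  moreover have "{x, g \<otimes> x \<otimes> inv g} \<subseteq> conj_class G x"
    using g assms(2) self_in_conj_class unfolding conj_class_def by auto
  ultimately have "card (conj_class G x) \<ge> 2"
    by (metis card_2_iff card_mono)
  moreover have "card (conj_class G x) \<noteq> 2"
    using odd_card_conj_class[OF assms(1,2)] by auto
  ultimately show ?thesis by linarith
qed

lemma commutator_in_derived:
  assumes "g \<in> carrier G" "h \<in> carrier G"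
  shows "g \<otimes> h \<otimes> inv g \<otimes> inv h \<in> derived G (carrier G)"
  using assms unfolding derived_def by (auto intro: generate.incl)

lemma commute_conj:
  assumes "a \<in> carrier G" "b \<in> carrier G" "h \<in> carrier G" "a \<otimes> b = b \<otimes> a"
  shows "(h \<otimes> a \<otimes> inv h) \<otimes> (h \<otimes> b \<otimes> inv h) = (h \<otimes> b \<otimes> inv h) \<otimes> (h \<otimes> a \<otimes> inv h)"
proof -
  have conj_mult: "(h \<otimes> x \<otimes> inv h) \<otimes> (h \<otimes> y \<otimes> inv h) = h \<otimes> (x \<otimes> y) \<otimes> inv h"
    if "x \<in> carrier G" "y \<in> carrier G" for x y
    using that assms(3) by (simp add: m_assoc inv_solve_left')
  show ?thesis
    using conj_mult[of a b] conj_mult[of b a] assms by simp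
qed

text \<open>Conjugating \<open>g\<close> by \<open>h\<close> multiplies it by the commutator
  \<open>g\<inverse> h\<inverse> g h \<in> G'\<close>. So when \<open>G'\<close> is abelian, an element of \<open>G'\<close> commuting
  with \<open>g\<close> also commutes with every conjugate of \<open>g\<close>.\<close>

lemma normal_derived_inter_centralizer:
  assumes comm: "\<And>x y. x \<in> derived G (carrier G) \<Longrightarrow> y \<in> derived G (carrier G) \<Longrightarrow> x \<otimes> y = y \<otimes> x"
    and g: "g \<in> carrier G"
  shows "derived G (carrier G) \<inter> centralizer G {g} \<lhd> G"
  unfolding normal_inv_iff
proof (intro conjI ballI)
  let ?V = "derived G (carrier G)"
  have V: "?V \<lhd> G" by (rule derived_self_is_normal)
  show "subgroup (?V \<inter> centralizer G {g}) G"
    using subgroups_Inter_pair[OF normal_imp_subgroup[OF V] subgroup_centralizer] g by simp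
  fix h v assume h: "h \<in> carrier G" and v: "v \<in> ?V \<inter> centralizer G {g}"
  then have vV: "v \<in> ?V" and vc: "v \<in> carrier G" and gv: "v \<otimes> g = g \<otimes> v"
    unfolding centralizer_def by auto
  define c where "c = inv g \<otimes> inv h \<otimes> g \<otimes> h"
  have c: "c \<in> ?V" "c \<in> carrier G"
    using commutator_in_derived[of "inv g" "inv h"] g h by (simp_all add: c_def)
  have conj_g: "inv h \<otimes> g \<otimes> h = g \<otimes> c"
    using g h by (simp add: c_def m_assoc[symmetric])
  have "v \<otimes> (g \<otimes> c) = (g \<otimes> c) \<otimes> v"
    using gv comm[OF c(1) vV] g vc c(2) by (metis m_assoc)
  then have "(h \<otimes> v \<otimes> inv h) \<otimes> (h \<otimes> (g \<otimes> c) \<otimes> inv h)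
      = (h \<otimes> (g \<otimes> c) \<otimes> inv h) \<otimes> (h \<otimes> v \<otimes> inv h)"
    using commute_conj vc g h c(2) by simp
  moreover have "h \<otimes> (g \<otimes> c) \<otimes> inv h = g"
    using g h by (simp add: conj_g[symmetric] m_assoc) (simp add: m_assoc[symmetric])
  ultimately have "(h \<otimes> v \<otimes> inv h) \<otimes> g = g \<otimes> (h \<otimes> v \<otimes> inv h)"
    by simp
  moreover have "h \<otimes> v \<otimes> inv h \<in> ?V"
    using normal.inv_op_closed2[OF V h vV] .
  ultimately show "h \<otimes> v \<otimes> inv h \<in> ?V \<inter> centralizer G {g}"
    using h vc unfolding centralizer_def by auto
qed

text \<open>The four non-trivial elements of \<open>N\<close> would split into classes of odd size at least 3,
  which needs at least two classes and hence at least 6 elements.\<close>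

lemma normal_subgroup_card_5_meets_center:
  assumes "odd (order G)" "N \<lhd> G" "card N = 5"
  shows "N \<inter> center G \<noteq> {\<one>}"
proof
  assume trivial: "N \<inter> center G = {\<one>}"
  have N: "N \<subseteq> carrier G" "\<one> \<in> N" "finite N"
    using normal_imp_subgroup[OF assms(2)] assms(3)
    by (auto simp: subgroup.subset subgroup.one_closed card_ge_0_finite)
  have class_in: "conj_class G x \<subseteq> N - {\<one>}" if "x \<in> N - {\<one>}" for x
    using conj_class_subset_normal[OF assms(2)] one_notin_conj_class N(1) that by blast
  have class_ge_3: "card (conj_class G x) \<ge> 3" if "x \<in> N - {\<one>}" for x
    using card_conj_class_ge_3[OF assms(1)] trivial N(1) that by blast
  have card_rest: "card (N - {\<one>}) = 4"
    using assms(3) N by simp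
  then have "N - {\<one>} \<noteq> {}"
    by (metis card.empty zero_neq_numeral)
  then obtain x where x: "x \<in> N - {\<one>}"
    by blast
  have "odd (card (conj_class G x))"
    using odd_card_conj_class[OF assms(1)] x N(1) by blast
  then have "conj_class G x \<noteq> N - {\<one>}"
    using card_rest by (metis even_numeral)
  then obtain y where y: "y \<in> N - {\<one>}" "y \<notin> conj_class G x"
    using class_in[OF x] by blast
  have disjoint: "conj_class G x \<inter> conj_class G y = {}"
    using conj_class_eq_or_disjoint[of x y] self_in_conj_class[of y] x y N(1) by blast
  have finite_class: "finite (conj_class G z)" if "z \<in> N - {\<one>}" for z
    using finite_subset[OF class_in[OF that]] N(3) by blast
  have "card (conj_class G x \<union> conj_class G y) = card (conj_class G x) + card (conj_class G y)"
    using card_Un_disjoint[OF finite_class[OF x] finite_class[OF y(1)] disjoint] .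
  then have "card (conj_class G x \<union> conj_class G y) \<ge> 6"
    using class_ge_3[OF x] class_ge_3[OF y(1)] by linarith
  moreover have "card (conj_class G x \<union> conj_class G y) \<le> card (N - {\<one>})"
    using class_in[OF x] class_in[OF y(1)] N(3) by (intro card_mono) auto
  ultimately show False
    using card_rest by simp
qed

lemma card_conj_class_eq_index:
  assumes "finite (carrier G)" "x \<in> carrier G" "centralizer G {x} = H"
  shows "card (conj_class G x) = card (rcosets H)"
proof -
  have H: "subgroup H G"
    using subgroup_centralizer[of "{x}"] assms(2,3) by simp
  have "card H > 0"
    using subgroup.one_closed[OF H] finite_subset[OF subgroup.subset[OF H] assms(1)]
    by (auto simp: card_gt_0_iff)
  then show ?thesis
    using card_conj_class_mult_card_centralizer[OF assms(2)] lagrange[OF H] assms(3)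
    by (metis mult_right_cancel not_gr0)
qed

lemma dvd_card_union_of_conj_classes:
  assumes "finite S" "S \<subseteq> carrier G"
    and "\<And>x. x \<in> S \<Longrightarrow> conj_class G x \<subseteq> S \<and> card (conj_class G x) = k"
  shows "k dvd card S"
proof -
  have "\<Union> (conj_class G ` S) = S"
    using assms(2,3) self_in_conj_class by blast
  moreover have "k * card (conj_class G ` S) = card (\<Union> (conj_class G ` S))"
  proof (rule card_partition)
    show "\<And>c1 c2. c1 \<in> conj_class G ` S \<Longrightarrow> c2 \<in> conj_class G ` S \<Longrightarrow> c1 \<noteq> c2 \<Longrightarrow> c1 \<inter> c2 = {}"
      using conj_class_eq_or_disjoint assms(2) by blast
  qed (use assms calculation in auto)
  ultimately show ?thesis
    by (metis dvd_triv_left)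
qed

end

locale odd_group_with_abelian_derived_of_order_25 = group +
  assumes odd_order: "odd (order G)"
    and derived_commute:
      "\<And>x y. x \<in> derived G (carrier G) \<Longrightarrow> y \<in> derived G (carrier G) \<Longrightarrow> x \<otimes> y = y \<otimes> x"
    and card_derived: "card (derived G (carrier G)) = 25"
    and derived_inter_center: "derived G (carrier G) \<inter> center G = {\<one>}"
begin

lemma derived_subgroup: "subgroup (derived G (carrier G)) G"
  by (rule derived_is_subgroup) simp

lemma derived_inter_centralizer_trivial:
  assumes "g \<in> carrier G" "g \<notin> centralizer G (derived G (carrier G))"
  shows "derived G (carrier G) \<inter> centralizer G {g} = {\<one>}"
proof -
  let ?V = "derived G (carrier G)"
  let ?F = "?V \<inter> centralizer G {g}"
  have F: "?F \<lhd> G"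
    using normal_derived_inter_centralizer[OF derived_commute assms(1)] by blast
  have "card ?F dvd 5\<^sup>2"
    using card_subgroup_dvd_card[OF normal_imp_subgroup[OF F] derived_subgroup] card_derived by simp
  then consider "card ?F = 1" | "card ?F = 5" | "card ?F = 25"
    using dvd_prime_square_cases[of 5] by fastforce
  then show ?thesis
  proof cases
    case 1
    then obtain a where "?F = {a}"
      by (rule card_1_singletonE)
    moreover have "\<one> \<in> ?F"
      using subgroup.one_closed[OF normal_imp_subgroup[OF F]] .
    ultimately show ?thesis
      by simp
  next
    case 2
    have "\<one> \<in> centralizer G {g}"
      using assms(1) by (simp add: centralizer_def)
    then have "?F \<inter> center G = {\<one>}"
      using derived_inter_center by blast
    then show ?thesis
      using normal_subgroup_card_5_meets_center[OF odd_order F 2] by blast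
  next
    case 3
    have "finite ?V"
      using card_derived by (intro card_ge_0_finite) simp
    then have "?F = ?V"
      using 3 card_derived card_subset_eq[of ?V ?F] by auto
    then have "h \<otimes> g = g \<otimes> h" if "h \<in> ?V" for h
      using that by (auto simp: centralizer_def)
    then have "g \<in> centralizer G ?V"
      using assms(1) by (simp add: centralizer_def)
    then show ?thesis
      using assms(2) by blast
  qed
qed

lemma centralizer_derived_element:
  assumes "x \<in> derived G (carrier G)" "x \<noteq> \<one>"
  shows "centralizer G {x} = centralizer G (derived G (carrier G))"
proof
  show "centralizer G (derived G (carrier G)) \<subseteq> centralizer G {x}"
    using assms(1) by (auto simp: centralizer_def)
  show "centralizer G {x} \<subseteq> centralizer G (derived G (carrier G))"
  proof
    fix g assume g: "g \<in> centralizer G {x}"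
    then have "x \<in> derived G (carrier G) \<inter> centralizer G {g}"
      using assms(1) subgroup.subset[OF derived_subgroup] by (auto simp: centralizer_def)
    then show "g \<in> centralizer G (derived G (carrier G))"
      using derived_inter_centralizer_trivial assms(2) g by (auto simp: centralizer_def)
  qed
qed

lemma card_conj_class_derived:
  assumes "x \<in> derived G (carrier G)" "x \<noteq> \<one>"
  shows "card (conj_class G x) = card (rcosets (centralizer G (derived G (carrier G))))"
  using card_conj_class_eq_index[OF finite_carrier_if_odd_order[OF odd_order] _ centralizer_derived_element[OF assms]]
    assms(1) subgroup.subset[OF derived_subgroup] by blast

lemma index_centralizer_derived: "card (rcosets (centralizer G (derived G (carrier G)))) = 3"
proof -
  let ?V = "derived G (carrier G)"
  let ?k = "card (rcosets (centralizer G ?V))"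
  have V: "?V \<lhd> G" "?V \<subseteq> carrier G"
    using derived_self_is_normal subgroup.subset[OF derived_subgroup] by simp_all
  have "\<one> \<in> ?V" "finite ?V"
    using subgroup.one_closed[OF derived_subgroup] card_derived by (simp_all add: card_ge_0_finite)
  then have card_rest: "card (?V - {\<one>}) = 24"
    using card_derived by simp
  have "?k dvd card (?V - {\<one>})"
  proof (rule dvd_card_union_of_conj_classes)
    fix x assume x: "x \<in> ?V - {\<one>}"
    then have "conj_class G x \<subseteq> ?V - {\<one>}"
      using conj_class_subset_normal[OF V(1)] one_notin_conj_class V(2) by blast
    then show "conj_class G x \<subseteq> ?V - {\<one>} \<and> card (conj_class G x) = ?k"
      using card_conj_class_derived x by simp
  qed (use \<open>finite ?V\<close> V(2) in auto)
  then have "?k dvd 24"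
    using card_rest by simp
  moreover have "odd ?k"
    using lagrange[OF subgroup_centralizer[OF V(2)]] odd_order by (metis even_mult_iff)
  moreover have "?k \<ge> 3"
  proof -
    have "?V - {\<one>} \<noteq> {}"
      using card_rest by (metis card.empty zero_neq_numeral)
    then obtain x where x: "x \<in> ?V" "x \<noteq> \<one>"
      by blast
    moreover have "x \<notin> center G"
      using x derived_inter_center by blast
    ultimately show ?thesis
      using card_conj_class_derived[OF x] card_conj_class_ge_3[OF odd_order, of x] V(2) by auto
  qed
  ultimately show ?thesis
    using odd_divisor_of_24 by simp
qed

end

theorem lemma4p2:
  fixes G :: "('a, 'b) monoid_scheme"
  assumes "group G"
    and "finite (carrier G)"
    and "order G mod 6 = 3"
    and "subgroup_generated G (derived G (carrier G)) \<cong> integer_mod_group 5 \<times>\<times> integer_mod_group 5"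
    and "derived G (carrier G) \<inter> center G = {\<one>\<^bsub>G\<^esub>}"
  shows "(\<forall>x \<in> derived G (carrier G) - center G. card (conj_class G x) = 3)
         \<and> order (G Mod centralizer G (derived G (carrier G))) = 3"
proof -
  interpret group G by fact
  let ?V = "derived G (carrier G)"
  have V: "subgroup ?V G"
    by (rule derived_is_subgroup) simp
  have C5xC5: "comm_group (integer_mod_group 5 \<times>\<times> integer_mod_group 5)"
    by (simp add: comm_group_DirProd)
  interpret odd_group_with_abelian_derived_of_order_25 G
  proof
    show "odd (order G)"
      using assms(3) by presburger
    show "x \<otimes>\<^bsub>G\<^esub> y = y \<otimes>\<^bsub>G\<^esub> x" if "x \<in> ?V" "y \<in> ?V" for x y
      using subgroup_commutes_if_iso_comm_group[OF V assms(4) C5xC5 that] .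
    show "card ?V = 25"
      using iso_same_card[OF assms(4)]
      by (simp add: subgroup.carrier_subgroup_generated_subgroup[OF V] carrier_integer_mod_group)
    show "?V \<inter> center G = {\<one>\<^bsub>G\<^esub>}"
      by fact
  qed
  have "\<one>\<^bsub>G\<^esub> \<in> center G"
    by (simp add: center_def)
  then show ?thesis
    using card_conj_class_derived index_centralizer_derived by (auto simp: FactGroup_def order_def)
qed

end
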